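(* Consider conditional geometric resampling (CGR) at round $t$. For each base-arm $i$ with $a_{t,i}=1$ and $\sigma_i>m$, each sample $r''_t$ used by CGR for base-arm $i$ follows the conditional distribution of $\mathcal{D}^d$ given $$\mathcal{E}_{t,i}=\left\{\left|\{j:r''_{t,j}\ge r''_{t,i},\ \sigma_j\le\sigma_i\}\right|\le m\right\}.$$ In addition, for any $i\in[d]$ with $a_{t,i}=1$, the output $\widehat{w_{t,i}^{-1}}=\left(\frac{\sigma_i}{m}\vee1\right)M_{t,i}$ is an unbiased estimator of $w_{t,i}^{-1}$, i.e. $\mathbb{E}[\widehat{w_{t,i}^{-1}}\mid\hat L_t,a_{t,i}=1]=1/w_{t,i}$, and the total number $M_t$ of resampling iterations satisfies $$\mathbb{E}[M_t\mid\hat L_t]\le m+m\log(d/m).$$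
   Context: Size-invariant semi-bandit with $1\le m\le d$ and $\mathcal{A}=\{a\in\{0,1\}^d:\|a\|_1=m\}$. FTPL with learning rate $\eta>0$ and perturbation distribution $\mathcal{D}$ on $\mathbb{R}$ (continuous, e.g. Fréchet or Pareto), $\mathcal{D}^d$ the law of a vector with i.i.d. coordinates from $\mathcal{D}$; in round $t$, with cumulative estimated loss $\hat L_t$, the played action is $a_t\in\arg\min_{a\in\mathcal{A}}a^\top(\eta\hat L_t-r_t)$, $r_t\sim\mathcal{D}^d$, and $w_{t,i}$ is the probability given $\hat L_t$ that $a_{t,i}=1$. $\sigma_j$ denotes the number of arms $k$ (including $j$) with $\hat L_{t,k}\le\hat L_{t,j}$, ties broken arbitrarily so that $\sigma$ is a permutation of $[d]$. $a\vee b=\max(a,b)$. CGR procedure (given $a_t,\hat L_t,\eta$): set $K=0\in\mathbb{R}^d$, $s=a_t$, $U=\{i:a_{t,i}=1,\sigma_i>m\}$, $C_i=\sigma_i/m$ for $i\in U$ and $C_i=1$ otherwise. Repeat: {$K\leftarrow K+s$; draw $r'\sim\mathcal{D}^d$ independently; $a'\in\arg\min_{a\in\mathcal{A}}a^\top(\eta\hat L_t-r')$; draw $\theta$ uniformly from $[m]$; for each $i\in U$: let $i'$ be such that $r'_{i'}$ is the $\theta$-th largest in $\{r'_j:\sigma_j\le\sigma_i\}$, let $r''$ be $r'$ with coordinates $i$ and $i'$ swapped, reset $a'_i=[\arg\min_{a\in\mathcal{A}}a^\top(\eta\hat L_t-r'')]_i$, and if $a'_i=1$ remove $i$ from $U$;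 then $s\leftarrow s\circ(\mathbf 1_d-a')$} until $s=0$. Output $\widehat{w_{t,i}^{-1}}=C_iK_i$ for all $i$ with $a_{t,i}=1$. Here $M_{t,i}=K_i$ is the number of iterations until $s_i$ becomes $0$, and $M_t=\max_{i:a_{t,i}=1}M_{t,i}$ is the total number of iterations. *)

theory Defs
  imports "HOL-Probability.Probability"
begin

text \<open>Base arms are indexed by 0..d-1 (i.e. the set lessThan d).
  Vectors in R^d are functions nat => real; perturbation vectors live in the
  product measure PiM over lessThan d.\<close>

text \<open>Score of arm j: minimising a^T(eta L - r) over actions with exactly m ones
  is the same as picking m arms of largest score r_j - eta L_j.\<close>
definition score :: "real \<Rightarrow> (nat \<Rightarrow> real) \<Rightarrow> (nat \<Rightarrow> real) \<Rightarrow> nat \<Rightarrow> real" where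
  "score \<eta> L r j = r j - \<eta> * L j"

text \<open>FTPL action (coordinate i of the argmin action), with ties broken by index:
  arm i is played iff fewer than m arms beat it in the order (larger score, then smaller index).
  This is an element of argmin over the action set; ties occur with probability 0.\<close>
definition ftpl_act :: "nat \<Rightarrow> nat \<Rightarrow> real \<Rightarrow> (nat \<Rightarrow> real) \<Rightarrow> (nat \<Rightarrow> real) \<Rightarrow> nat \<Rightarrow> bool" where
  "ftpl_act d m \<eta> L r i \<longleftrightarrow>
     card {j \<in> {..<d}. score \<eta> L r j > score \<eta> L r i \<or> (score \<eta> L r j = score \<eta> L r i \<and> j < i)} < m"

text \<open>The index of the theta-th largest (theta = 1,2,...) value of r on S (ties broken by index).\<close>
definition kth_largest :: "nat set \<Rightarrow> (nat \<Rightarrow> real) \<Rightarrow> nat \<Rightarrow> nat" where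
  "kth_largest S r \<theta> = (THE j. j \<in> S \<and> card {k \<in> S. r k > r j \<or> (r k = r j \<and> k < j)} = \<theta> - 1)"

definition cgr_swap :: "nat \<Rightarrow> (nat \<Rightarrow> nat) \<Rightarrow> nat \<Rightarrow> (nat \<Rightarrow> real) \<Rightarrow> nat \<Rightarrow> (nat \<Rightarrow> real)" where
  "cgr_swap d \<sigma> i r \<theta> =
     (let i' = kth_largest {j \<in> {..<d}. \<sigma> j \<le> \<sigma> i} r \<theta> in r(i := r i', i' := r i))"

definition pert :: "nat \<Rightarrow> real measure \<Rightarrow> (nat \<Rightarrow> real) measure" where
  "pert d D = PiM {..<d} (\<lambda>_. D)"

text \<open>Probability space of round t given hat L_t: the FTPL perturbation r_t together with
  an i.i.d. sequence of CGR draws (r', theta), r' ~ D^d, theta uniform on 1..m.\<close>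
definition cgr_space :: "nat \<Rightarrow> nat \<Rightarrow> real measure \<Rightarrow> ((nat \<Rightarrow> real) \<times> ((nat \<Rightarrow> real) \<times> nat) stream) measure" where
  "cgr_space d m D = pert d D \<Otimes>\<^sub>M stream_space (pert d D \<Otimes>\<^sub>M measure_pmf (pmf_of_set {1..m}))"

text \<open>Value of a'_i produced by one CGR iteration with draw x = (r', theta): arms in U
  (a_{t,i} = 1 and sigma_i > m) use the swapped sample r'', the other arms use r'.\<close>
definition cgr_hit :: "nat \<Rightarrow> nat \<Rightarrow> real \<Rightarrow> (nat \<Rightarrow> real) \<Rightarrow> (nat \<Rightarrow> nat) \<Rightarrow> nat \<Rightarrow> (nat \<Rightarrow> real) \<times> nat \<Rightarrow> bool" where
  "cgr_hit d m \<eta> L \<sigma> i x =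
     (if m < \<sigma> i then ftpl_act d m \<eta> L (cgr_swap d \<sigma> i (fst x) (snd x)) i
      else ftpl_act d m \<eta> L (fst x) i)"

text \<open>M_{t,i} = K_i: number of iterations until s_i becomes 0 (iterations counted from 1).\<close>
definition cgr_M :: "nat \<Rightarrow> nat \<Rightarrow> real \<Rightarrow> (nat \<Rightarrow> real) \<Rightarrow> (nat \<Rightarrow> nat) \<Rightarrow> nat
    \<Rightarrow> (nat \<Rightarrow> real) \<times> ((nat \<Rightarrow> real) \<times> nat) stream \<Rightarrow> nat" where
  "cgr_M d m \<eta> L \<sigma> i \<omega> = Suc (LEAST k. cgr_hit d m \<eta> L \<sigma> i (snd \<omega> !! k))"

definition cgr_Mtot :: "nat \<Rightarrow> nat \<Rightarrow> real \<Rightarrow> (nat \<Rightarrow> real) \<Rightarrow> (nat \<Rightarrow> nat)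
    \<Rightarrow> (nat \<Rightarrow> real) \<times> ((nat \<Rightarrow> real) \<times> nat) stream \<Rightarrow> nat" where
  "cgr_Mtot d m \<eta> L \<sigma> \<omega> = Max {cgr_M d m \<eta> L \<sigma> i \<omega> | i. i < d \<and> ftpl_act d m \<eta> L (fst \<omega>) i}"

definition cgr_est :: "nat \<Rightarrow> nat \<Rightarrow> real \<Rightarrow> (nat \<Rightarrow> real) \<Rightarrow> (nat \<Rightarrow> nat) \<Rightarrow> nat
    \<Rightarrow> (nat \<Rightarrow> real) \<times> ((nat \<Rightarrow> real) \<times> nat) stream \<Rightarrow> real" where
  "cgr_est d m \<eta> L \<sigma> i \<omega> = max (real (\<sigma> i) / real m) 1 * real (cgr_M d m \<eta> L \<sigma> i \<omega>)"

definition ftpl_w :: "nat \<Rightarrow> nat \<Rightarrow> real measure \<Rightarrow> real \<Rightarrow> (nat \<Rightarrow> real) \<Rightarrow> nat \<Rightarrow> real" where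
  "ftpl_w d m D \<eta> L i = measure (pert d D) {r \<in> space (pert d D). ftpl_act d m \<eta> L r i}"

definition cgr_event :: "nat \<Rightarrow> nat \<Rightarrow> real measure \<Rightarrow> (nat \<Rightarrow> nat) \<Rightarrow> nat \<Rightarrow> (nat \<Rightarrow> real) set" where
  "cgr_event d m D \<sigma> i =
     {r \<in> space (pert d D). card {j \<in> {..<d}. r j \<ge> r i \<and> \<sigma> j \<le> \<sigma> i} \<le> m}"

end

theory Submission
  imports Defs "HOL-Combinatorics.Transposition"
begin

text \<open>The swapped sample of CGR for arm \<open>i\<close> is \<open>r'\<close> composed with the transposition of \<open>i\<close> and the
  coordinate of rank \<open>\<theta> - 1\<close> among the arms \<open>j\<close> with \<open>\<sigma> j \<le> \<sigma> i\<close>. The law \<open>D^d\<close> is invariant under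
  transpositions of coordinates and almost surely has no ties, so the transposition with the arm of
  rank \<open>t\<close> carries the event "that arm has rank \<open>t\<close>" onto "\<open>i\<close> has rank \<open>t\<close>". Summing over the
  \<open>\<sigma> i\<close> candidate arms and the \<open>m\<close> equally likely values of \<open>\<theta>\<close>, the swapped sample has density
  \<open>\<sigma> i / m\<close> times the indicator of "\<open>i\<close> has rank below \<open>m\<close>", which up to a null set is the event
  \<open>E_{t,i}\<close>; ranks being uniform, that event has probability \<open>m / \<sigma> i\<close>.

  A played arm has rank below \<open>m\<close> among these arms, so one CGR draw hits arm \<open>i\<close> with probability
  \<open>C_i w_i\<close>, where \<open>C_i = max (\<sigma> i / m) 1\<close>. Hence \<open>M_{t,i}\<close> is geometric and \<open>C_i M_{t,i}\<close> has
  mean \<open>1 / w_i\<close>. Bounding \<open>M_t\<close> by the sum of \<open>M_{t,i}\<close> over the played arms gives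
  \<open>E M_t \<le> \<Sum>i. 1 / C_i = \<Sum>s = 1..d. min 1 (m / s) \<le> m + m ln (d / m)\<close>.\<close>

section \<open>Ranks with ties broken by index\<close>

definition beats :: "(nat \<Rightarrow> real) \<Rightarrow> nat \<Rightarrow> nat \<Rightarrow> bool" where
  "beats r k j \<longleftrightarrow> r k > r j \<or> (r k = r j \<and> k < j)"

definition rank_among :: "nat set \<Rightarrow> (nat \<Rightarrow> real) \<Rightarrow> nat \<Rightarrow> nat" where
  "rank_among S r j = card {k \<in> S. beats r k j}"

lemma beats_irrefl: "\<not> beats r j j"
  by (auto simp: beats_def)

lemma beats_trans: "beats r a b \<Longrightarrow> beats r b c \<Longrightarrow> beats r a c"
  by (auto simp: beats_def)

lemma beats_total: "a \<noteq> b \<Longrightarrow> beats r a b \<or> beats r b a"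
  by (auto simp: beats_def)

lemma beats_iff_less: "a \<noteq> b \<Longrightarrow> r a \<noteq> r b \<Longrightarrow> beats r a b \<longleftrightarrow> r b < r a"
  by (auto simp: beats_def)

lemma ftpl_act_iff_rank_among: "ftpl_act d m \<eta> L r i \<longleftrightarrow> rank_among {..<d} (score \<eta> L r) i < m"
  by (simp add: ftpl_act_def rank_among_def beats_def)

lemma kth_largest_eq_The: "kth_largest S r \<theta> = (THE j. j \<in> S \<and> rank_among S r j = \<theta> - 1)"
  by (simp add: kth_largest_def rank_among_def beats_def)

lemma rank_among_less_card:
  assumes "finite S" "j \<in> S"
  shows "rank_among S r j < card S"
  unfolding rank_among_def using assms beats_irrefl by (intro psubset_card_mono) auto

lemma rank_among_strict_mono:
  assumes "finite S" "j \<in> S" "beats r j k"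
  shows "rank_among S r j < rank_among S r k"
proof -
  have "{k' \<in> S. beats r k' j} \<subset> {k' \<in> S. beats r k' k}"
    using assms beats_trans beats_irrefl by blast
  then show ?thesis
    unfolding rank_among_def using assms(1) by (intro psubset_card_mono) auto
qed

lemma inj_on_rank_among: "finite S \<Longrightarrow> inj_on (rank_among S r) S"
  by (metis beats_total inj_onI less_irrefl rank_among_strict_mono)

lemma bij_betw_rank_among:
  assumes "finite S"
  shows "bij_betw (rank_among S r) S {..<card S}"
proof -
  have "rank_among S r ` S \<subseteq> {..<card S}"
    using rank_among_less_card[OF assms] by auto
  moreover have "card (rank_among S r ` S) = card {..<card S}"
    using card_image[OF inj_on_rank_among[OF assms]] by simp
  ultimately show ?thesis
    using inj_on_rank_among[OF assms] by (simp add: bij_betw_def card_subset_eq)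
qed

lemma kth_largest_eq_iff:
  assumes "finite S" "t < card S"
  shows "kth_largest S r (Suc t) = j \<longleftrightarrow> j \<in> S \<and> rank_among S r j = t"
proof -
  have "t \<in> rank_among S r ` S"
    using bij_betw_imp_surj_on[OF bij_betw_rank_among[OF assms(1)]] assms(2) by simp
  then obtain j0 where j0: "j0 \<in> S" "rank_among S r j0 = t"
    by blast
  have unique: "j = j0" if "j \<in> S" "rank_among S r j = t" for j
    by (rule inj_onD[OF inj_on_rank_among[OF assms(1), of r]]) (use that j0 in auto)
  have kth: "kth_largest S r (Suc t) = j0"
    unfolding kth_largest_eq_The diff_Suc_1 by (rule the_equality) (use j0 unique in blast)+
  show ?thesis
    using kth j0 unique[of j] by auto
qed

lemma kth_largest_in:
  "finite S \<Longrightarrow> t < card S \<Longrightarrow> kth_largest S r (Suc t) \<in> S"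
  using kth_largest_eq_iff by blast

lemma fun_upd_swap_eq_comp_transpose: "r(i := r j, j := r i) = r \<circ> Transposition.transpose i j"
  by (auto simp: fun_eq_iff Transposition.transpose_def)

lemma rank_among_comp_transpose:
  assumes inj: "inj_on r S" and i: "i \<in> S" and j: "j \<in> S"
  shows "rank_among S (r \<circ> Transposition.transpose i j) j = rank_among S r i"
proof -
  let ?\<tau> = "Transposition.transpose i j"
  have "{k \<in> S. beats (r \<circ> ?\<tau>) k j} = ?\<tau> ` {k \<in> S. beats r k i}"
  proof -
    have "beats (r \<circ> ?\<tau>) k j \<longleftrightarrow> beats r (?\<tau> k) i" if "k \<in> S" for k
    proof (cases "k = j")
      case False
      have "?\<tau> k \<noteq> i"
        using False by (auto simp: transpose_eq_iff)
      moreover have "?\<tau> k \<in> S"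
        using False that i j by (cases "k = i") auto
      ultimately show ?thesis
        using False inj i j by (simp add: beats_iff_less inj_on_eq_iff)
    qed (simp add: beats_irrefl)
    moreover have "?\<tau> k \<in> S \<longleftrightarrow> k \<in> S" for k
      using i j unfolding Transposition.transpose_def by auto
    ultimately show ?thesis
      by (auto simp: in_transpose_image_iff)
  qed
  then show ?thesis
    unfolding rank_among_def by (metis card_image inj_on_transpose)
qed

lemma measurable_card_Collect:
  assumes "finite S" "\<And>k. k \<in> S \<Longrightarrow> Measurable.pred M (Q k)"
  shows "(\<lambda>x. card {k \<in> S. Q k x}) \<in> measurable M (count_space UNIV)"
  using assms
proof (induction S rule: finite_induct)
  case (insert a S)
  have "{k \<in> insert a S. Q k x} = (if Q a x then insert a {k \<in> S. Q k x} else {k \<in> S. Q k x})" for x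
    by auto
  then have "card {k \<in> insert a S. Q k x} = (if Q a x then 1 else 0) + card {k \<in> S. Q k x}" for x
    using insert.hyps by simp
  moreover note [measurable] = insert.prems[of a] insert.IH[OF insert.prems]
  ultimately show ?case
    by simp
qed simp

lemma measurable_rank_among:
  assumes "finite S" and [measurable]: "\<And>k. (\<lambda>x. f x k) \<in> borel_measurable M"
  shows "(\<lambda>x. rank_among S (f x) j) \<in> measurable M (count_space UNIV)"
  unfolding rank_among_def beats_def using assms(1) by (rule measurable_card_Collect) measurable

lemma measurable_kth_largest:
  assumes "finite S" and [measurable]: "\<And>k. (\<lambda>x. f x k) \<in> borel_measurable M"
  shows "(\<lambda>x. kth_largest S (f x) \<theta>) \<in> measurable M (count_space UNIV)"
proof -
  have kth: "kth_largest S r \<theta> = kth_largest S r (Suc (\<theta> - 1))" for r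
    by (simp add: kth_largest_eq_The)
  show ?thesis
  proof (cases "\<theta> - 1 < card S")
    case True
    have [measurable]: "(\<lambda>x. rank_among S (f x) j) \<in> measurable M (count_space UNIV)" for j
      using assms by (rule measurable_rank_among)
    have pre: "(\<lambda>x. kth_largest S (f x) \<theta>) -` {j} \<inter> space M
        = {x \<in> space M. j \<in> S \<and> rank_among S (f x) j = \<theta> - 1}" for j
      unfolding kth using kth_largest_eq_iff[OF assms(1) True] by blast
    have "{x \<in> space M. j \<in> S \<and> rank_among S (f x) j = \<theta> - 1} \<in> sets M" for j
      by measurable
    then show ?thesis
      unfolding measurable_count_space_eq2_countable pre by blast
  next
    case False
    have "\<not> (j \<in> S \<and> rank_among S r j = \<theta> - 1)" for j r
      using False rank_among_less_card[OF assms(1), of j r] by auto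
    then have "kth_largest S r \<theta> = (THE j. False)" for r
      unfolding kth_largest_eq_The by metis
    then show ?thesis
      by simp
  qed
qed

lemma pred_ftpl_act:
  assumes [measurable]: "\<And>k. (\<lambda>x. f x k) \<in> borel_measurable M"
  shows "Measurable.pred M (\<lambda>x. ftpl_act d m \<eta> L (f x) i)"
proof -
  have "(\<lambda>x. rank_among {..<d} (score \<eta> L (f x)) i) \<in> measurable M (count_space UNIV)"
    unfolding score_def by (rule measurable_rank_among) auto
  then show ?thesis
    unfolding ftpl_act_iff_rank_among by measurable
qed

section \<open>The perturbation distribution\<close>

locale iid_perturbation =
  fixes d :: nat and D :: "real measure"
  assumes prob_space_D: "prob_space D" and sets_D: "sets D = sets borel"
    and atomless_D: "\<And>x. emeasure D {x} = 0"
begin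

abbreviation P :: "(nat \<Rightarrow> real) measure" where
  "P \<equiv> pert d D"

lemma prob_space_P: "prob_space P"
  unfolding pert_def by (intro prob_space_PiM prob_space_D)

lemma space_P: "space P = {..<d} \<rightarrow>\<^sub>E UNIV"
  using sets_eq_imp_space_eq[OF sets_D] by (simp add: pert_def space_PiM)

lemma measurable_component_P [measurable]: "(\<lambda>r. r n) \<in> borel_measurable P"
proof (cases "n < d")
  case True
  then show ?thesis
    unfolding pert_def using measurable_component_singleton[of n "{..<d}" "\<lambda>_. D"]
    by (simp add: measurable_cong_sets[OF refl sets_D])
next
  case False
  then show ?thesis
    by (subst measurable_cong[where g = "\<lambda>_. undefined"]) (auto simp: space_P)
qed

lemma AE_component_neq:
  assumes j: "j < d" and k: "k < d" and "j \<noteq> k"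
  shows "AE r in P. r j \<noteq> r k"
proof -
  interpret product_sigma_finite "\<lambda>_. D"
    unfolding product_sigma_finite_def using prob_space_D prob_space_imp_sigma_finite by blast
  let ?N = "{r \<in> space P. r j = r k}"
  let ?P' = "Pi\<^sub>M ({..<d} - {j}) (\<lambda>_. D)"
  have N [measurable]: "?N \<in> sets P"
    by measurable
  have slice_null: "(\<integral>\<^sup>+ y. indicator ?N (x(j := y)) \<partial>D) = 0" if x: "x \<in> space ?P'" for x
  proof -
    have "(\<integral>\<^sup>+ y. indicator ?N (x(j := y)) \<partial>D) = (\<integral>\<^sup>+ y. indicator {x k} y \<partial>D)"
    proof (rule nn_integral_cong)
      fix y assume "y \<in> space D"
      then have "x(j := y) \<in> space P"
        using x j by (auto simp: space_P space_PiM PiE_iff extensional_def)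
      then show "indicator ?N (x(j := y)) = indicator {x k} y"
        using \<open>j \<noteq> k\<close> by (auto simp: indicator_def)
    qed
    then show ?thesis
      using atomless_D sets_D by simp
  qed
  have insert_j: "insert j ({..<d} - {j}) = {..<d}"
    using j by auto
  have "emeasure P ?N = (\<integral>\<^sup>+ r. indicator ?N r \<partial>P)"
    by simp
  also have "\<dots> = (\<integral>\<^sup>+ x. (\<integral>\<^sup>+ y. indicator ?N (x(j := y)) \<partial>D) \<partial>?P')"
    using product_nn_integral_insert[of "{..<d} - {j}" j "indicator ?N"] N
    unfolding pert_def insert_j by simp
  also have "\<dots> = 0"
    by (simp add: slice_null cong: nn_integral_cong)
  finally show ?thesis
    by (subst AE_iff_measurable[OF N]) auto
qed

lemma AE_inj_on: "AE r in P. inj_on r {..<d}"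
proof -
  have "AE r in P. \<forall>j\<in>{..<d}. \<forall>k\<in>{..<d}. j \<noteq> k \<longrightarrow> r j \<noteq> r k"
    by (intro AE_finite_allI) (auto intro: AE_component_neq)
  then show ?thesis
    by eventually_elim (auto simp: inj_on_def)
qed

lemma comp_transpose_eq_restrict:
  assumes "r \<in> space P" "i < d" "j < d"
  shows "r \<circ> Transposition.transpose i j = (\<lambda>n\<in>{..<d}. r (Transposition.transpose i j n))"
  using assms by (auto simp: space_P fun_eq_iff transpose_eq_iff PiE_def extensional_def)

lemma measurable_comp_transpose:
  assumes "i < d" "j < d"
  shows "(\<lambda>r. r \<circ> Transposition.transpose i j) \<in> measurable P P"
proof -
  have "(\<lambda>r. r n) \<in> measurable P D" for n
    using measurable_component_P[of n] by (simp only: measurable_cong_sets[OF refl sets_D])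
  then have "(\<lambda>r. \<lambda>n\<in>{..<d}. r (Transposition.transpose i j n)) \<in> measurable P (Pi\<^sub>M {..<d} (\<lambda>_. D))"
    by (rule measurable_restrict)
  then show ?thesis
    by (subst measurable_cong[OF comp_transpose_eq_restrict[OF _ assms]]) (simp_all only: pert_def)
qed

lemma distr_comp_transpose:
  assumes "i < d" "j < d"
  shows "distr P P (\<lambda>r. r \<circ> Transposition.transpose i j) = P"
proof -
  have "Transposition.transpose i j \<in> {..<d} \<rightarrow> {..<d}"
    using assms by (auto simp: Transposition.transpose_def)
  then have "distr P P (\<lambda>r. \<lambda>n\<in>{..<d}. r (Transposition.transpose i j n)) = P"
    using distr_PiM_reindex[of "{..<d}" "\<lambda>_. D" "Transposition.transpose i j" "{..<d}"] prob_space_D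
    by (simp add: pert_def)
  then show ?thesis
    by (simp add: comp_transpose_eq_restrict[OF _ assms] cong: distr_cong)
qed

lemma comp_transpose_eq_self: "r i = r j \<Longrightarrow> r \<circ> Transposition.transpose i j = r"
  by (auto simp: fun_eq_iff Transposition.transpose_def)

lemma pred_comp_transpose_in:
  assumes i: "i < d" and A: "A \<in> sets P"
  shows "Measurable.pred P (\<lambda>r. r \<circ> Transposition.transpose i j \<in> A)"
proof (cases "j < d")
  case True
  have "{r \<in> space P. r \<circ> Transposition.transpose i j \<in> A}
      = (\<lambda>r. r \<circ> Transposition.transpose i j) -` A \<inter> space P"
    by auto
  then show ?thesis
    using measurable_sets[OF measurable_comp_transpose[OF i True] A] by (simp add: pred_def)
next
  case False
  \<comment> \<open>Junk case: the swap stays in the sample space only if coordinate \<open>i\<close> holds \<open>undefined\<close>.\<close>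
  have "r \<circ> Transposition.transpose i j \<in> A \<longleftrightarrow> r \<in> A \<and> r i = undefined" if "r \<in> space P" for r
  proof
    assume in_A: "r \<circ> Transposition.transpose i j \<in> A"
    then have "r \<circ> Transposition.transpose i j \<in> {..<d} \<rightarrow>\<^sub>E UNIV"
      using sets.sets_into_space[OF A] by (auto simp: space_P)
    then have "(r \<circ> Transposition.transpose i j) j = undefined"
      by (rule PiE_arb) (use False in simp)
    moreover have "r j = undefined"
      using that False by (auto simp: space_P)
    ultimately show "r \<in> A \<and> r i = undefined"
      using in_A comp_transpose_eq_self[of r i j] by simp
  next
    assume "r \<in> A \<and> r i = undefined"
    moreover have "r j = undefined"
      using that False by (auto simp: space_P)
    ultimately show "r \<circ> Transposition.transpose i j \<in> A"
      using comp_transpose_eq_self[of r i j] by simp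
  qed
  moreover have "Measurable.pred P (\<lambda>r. r \<in> A \<and> r i = undefined)"
    using A by measurable
  ultimately show ?thesis
    by (subst measurable_cong) auto
qed

lemma measurable_rank_among_P:
  assumes "finite S"
  shows "(\<lambda>r. rank_among S r j) \<in> measurable P (count_space UNIV)"
  using assms by (rule measurable_rank_among) (rule measurable_component_P)

lemma emeasure_rank_among_comp_transpose:
  assumes S: "S \<subseteq> {..<d}" and i: "i \<in> S" and j: "j \<in> S" and B [measurable]: "B \<in> sets P"
  shows "emeasure P {r \<in> space P. rank_among S r j = t \<and> r \<circ> Transposition.transpose i j \<in> B}
       = emeasure P {r \<in> B. rank_among S r i = t}"
    (is "emeasure P ?F = _")
proof -
  let ?\<tau> = "Transposition.transpose i j"
  have ij: "i < d" "j < d"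
    using i j S by auto
  have [measurable]: "(\<lambda>r. rank_among S r k) \<in> measurable P (count_space UNIV)" for k
    using finite_subset[OF S] by (intro measurable_rank_among_P) simp
  have [measurable]: "Measurable.pred P (\<lambda>r. r \<circ> ?\<tau> \<in> B)"
    using ij B by (intro pred_comp_transpose_in)
  have F: "?F \<in> sets P"
    by measurable
  have "emeasure P ?F = emeasure P ((\<lambda>r. r \<circ> ?\<tau>) -` ?F \<inter> space P)"
    using emeasure_distr[OF measurable_comp_transpose[OF ij] F] by (simp add: distr_comp_transpose[OF ij])
  also have "\<dots> = emeasure P {r \<in> B. rank_among S r i = t}"
  proof (rule emeasure_eq_AE)
    show "AE r in P. r \<in> (\<lambda>r. r \<circ> ?\<tau>) -` ?F \<inter> space P \<longleftrightarrow> r \<in> {r \<in> B. rank_among S r i = t}"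
      using AE_inj_on
    proof eventually_elim
      case (elim r)
      then have "rank_among S (r \<circ> ?\<tau>) j = rank_among S r i"
        using S i j by (intro rank_among_comp_transpose) (auto intro: inj_on_subset)
      moreover have "r \<in> space P \<Longrightarrow> r \<circ> ?\<tau> \<in> space P"
        using measurable_space[OF measurable_comp_transpose[OF ij]] .
      ultimately show ?case
        using sets.sets_into_space[OF B] by (auto simp: comp_assoc)
    qed
    show "(\<lambda>r. r \<circ> ?\<tau>) -` ?F \<inter> space P \<in> sets P"
      using measurable_sets[OF measurable_comp_transpose[OF ij] F] .
    show "{r \<in> B. rank_among S r i = t} \<in> sets P"
      using sets.sets_into_space[OF B] by measurable
  qed
  finally show ?thesis .
qed

lemma emeasure_comp_transpose_kth_largest:
  assumes S: "S \<subseteq> {..<d}" and i: "i \<in> S" and t: "t < card S" and B [measurable]: "B \<in> sets P"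
  shows "emeasure P {r \<in> space P. r \<circ> Transposition.transpose i (kth_largest S r (Suc t)) \<in> B}
       = of_nat (card S) * emeasure P {r \<in> B. rank_among S r i = t}"
proof -
  have fin: "finite S"
    using S finite_subset by blast
  have [measurable]: "(\<lambda>r. rank_among S r j) \<in> measurable P (count_space UNIV)" for j
    using fin by (rule measurable_rank_among_P)
  have [measurable]: "Measurable.pred P (\<lambda>r. r \<circ> Transposition.transpose i j \<in> B)" for j
    using i S B by (intro pred_comp_transpose_in) auto
  define F where "F j = {r \<in> space P. rank_among S r j = t \<and> r \<circ> Transposition.transpose i j \<in> B}" for j
  have F_sets: "F j \<in> sets P" for j
    unfolding F_def by measurable
  have union: "{r \<in> space P. r \<circ> Transposition.transpose i (kth_largest S r (Suc t)) \<in> B} = (\<Union>j\<in>S. F j)"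
  proof (intro equalityI subsetI)
    fix r assume "r \<in> {r \<in> space P. r \<circ> Transposition.transpose i (kth_largest S r (Suc t)) \<in> B}"
    then show "r \<in> (\<Union>j\<in>S. F j)"
      using kth_largest_eq_iff[OF fin t, of r "kth_largest S r (Suc t)"] by (auto simp: F_def)
  next
    fix r assume "r \<in> (\<Union>j\<in>S. F j)"
    then obtain j where "j \<in> S" "r \<in> F j"
      by blast
    moreover from this have "kth_largest S r (Suc t) = j"
      using kth_largest_eq_iff[OF fin t] by (simp add: F_def)
    ultimately show "r \<in> {r \<in> space P. r \<circ> Transposition.transpose i (kth_largest S r (Suc t)) \<in> B}"
      by (simp add: F_def)
  qed
  have "disjoint_family_on F S"
    unfolding disjoint_family_on_def F_def using inj_on_rank_among[OF fin] by (auto dest: inj_onD)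
  then have "emeasure P (\<Union>j\<in>S. F j) = (\<Sum>j\<in>S. emeasure P (F j))"
    using fin F_sets by (intro sum_emeasure[symmetric]) auto
  then show ?thesis
    using S i B by (simp add: union F_def emeasure_rank_among_comp_transpose)
qed

lemma emeasure_rank_among:
  assumes S: "S \<subseteq> {..<d}" and i: "i \<in> S" and t: "t < card S"
  shows "emeasure P {r \<in> space P. rank_among S r i = t} = ennreal (1 / card S)"
proof -
  interpret prob_space P
    by (rule prob_space_P)
  have fin: "finite S"
    using S finite_subset by blast
  have "r \<circ> Transposition.transpose i (kth_largest S r (Suc t)) \<in> space P" if "r \<in> space P" for r
    using kth_largest_in[OF fin t, of r] S i that
    by (intro measurable_space[OF measurable_comp_transpose]) auto
  then have "{r \<in> space P. r \<circ> Transposition.transpose i (kth_largest S r (Suc t)) \<in> space P} = space P"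
    by auto
  then have "1 = of_nat (card S) * emeasure P {r \<in> space P. rank_among S r i = t}"
    using emeasure_comp_transpose_kth_largest[OF S i t sets.top] by (simp add: emeasure_space_1)
  then show ?thesis
    using t by (simp add: emeasure_eq_measure ennreal_of_nat_eq_real_of_nat ennreal_mult'[symmetric]
                     field_simps flip: ennreal_1)
qed

end

section \<open>Products and streams of independent draws\<close>

\<comment> \<open>The map need not be measurable; the CGR swap may leave the sample space for junk values of \<open>\<theta>\<close>.\<close>
lemma emeasure_distr_preimages:
  assumes "\<And>A. A \<in> sets N \<Longrightarrow> f -` A \<inter> space M \<in> sets M" and "A \<in> sets N"
  shows "emeasure (distr M N f) A = emeasure M (f -` A \<inter> space M)"
  unfolding distr_def
proof (rule emeasure_measure_of_sigma[OF sets.sigma_algebra_axioms _ _ assms(2)])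
  show "positive (sets N) (\<lambda>A. emeasure M (f -` A \<inter> space M))"
    by (simp add: positive_def)
  show "countably_additive (sets N) (\<lambda>A. emeasure M (f -` A \<inter> space M))"
  proof (rule countably_additiveI)
    fix F :: "nat \<Rightarrow> _"
    assume F: "range F \<subseteq> sets N" "disjoint_family F"
    have "(\<Sum>i. emeasure M (f -` F i \<inter> space M)) = emeasure M (\<Union>i. f -` F i \<inter> space M)"
      using F assms(1) by (intro suminf_emeasure) (auto simp: disjoint_family_on_def)
    also have "(\<Union>i. f -` F i \<inter> space M) = f -` (\<Union>i. F i) \<inter> space M"
      by auto
    finally show "(\<Sum>i. emeasure M (f -` F i \<inter> space M)) = emeasure M (f -` (\<Union>i. F i) \<inter> space M)" .
  qed
qed

lemma emeasure_pair_measure_pmf_of_set: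
  assumes "sigma_finite_measure M" "finite T" "T \<noteq> {}"
    and X: "X \<in> sets (M \<Otimes>\<^sub>M measure_pmf (pmf_of_set T))"
  shows "emeasure (M \<Otimes>\<^sub>M measure_pmf (pmf_of_set T)) X
       = ennreal (1 / card T) * (\<Sum>\<theta>\<in>T. emeasure M {x \<in> space M. (x, \<theta>) \<in> X})"
proof -
  interpret pair_sigma_finite M "measure_pmf (pmf_of_set T)"
    by (rule pair_sigma_finite.intro[OF assms(1) prob_space_imp_sigma_finite[OF prob_space_measure_pmf]])
  have "emeasure (M \<Otimes>\<^sub>M measure_pmf (pmf_of_set T)) X
      = (\<integral>\<^sup>+\<theta>. emeasure M ((\<lambda>x. (x, \<theta>)) -` X) \<partial>measure_pmf (pmf_of_set T))"
    by (rule emeasure_pair_measure_alt2[OF X])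
  also have "\<dots> = (\<Sum>\<theta>\<in>T. emeasure M {x \<in> space M. (x, \<theta>) \<in> X} * ennreal (1 / card T))"
    using assms(2,3) sets.sets_into_space[OF X]
    by (subst nn_integral_measure_pmf_finite)
       (auto intro!: sum.cong arg_cong2[where f = "(*)"] arg_cong[where f = "emeasure M"]
             simp: space_pair_measure)
  finally show ?thesis
    by (simp add: sum_distrib_left mult.commute)
qed

lemma nn_integral_pair_measure_mult:
  assumes "sigma_finite_measure N"
    and f: "f \<in> borel_measurable M" and g: "g \<in> borel_measurable N"
  shows "(\<integral>\<^sup>+\<omega>. f (fst \<omega>) * g (snd \<omega>) \<partial>(M \<Otimes>\<^sub>M N)) = (\<integral>\<^sup>+x. f x \<partial>M) * (\<integral>\<^sup>+y. g y \<partial>N)"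
proof -
  interpret N: sigma_finite_measure N
    by (fact assms(1))
  have "(\<integral>\<^sup>+\<omega>. f (fst \<omega>) * g (snd \<omega>) \<partial>(M \<Otimes>\<^sub>M N)) = (\<integral>\<^sup>+x. \<integral>\<^sup>+y. f x * g y \<partial>N \<partial>M)"
    using f g by (subst N.nn_integral_fst[symmetric]) auto
  also have "\<dots> = (\<integral>\<^sup>+x. f x * (\<integral>\<^sup>+y. g y \<partial>N) \<partial>M)"
    using g by (simp add: nn_integral_cmult)
  also have "\<dots> = (\<integral>\<^sup>+x. f x \<partial>M) * (\<integral>\<^sup>+y. g y \<partial>N)"
    using f by (simp add: nn_integral_multc)
  finally show ?thesis .
qed

context prob_space
begin

lemma distr_snth: "distr (stream_space M) M (\<lambda>s. s !! n) = M"
proof -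
  interpret product_prob_space "\<lambda>_. M" UNIV ..
  have "distr (stream_space M) M (\<lambda>s. s !! n) = distr (\<Pi>\<^sub>M i\<in>UNIV. M) M (\<lambda>\<omega>. to_stream \<omega> !! n)"
    by (subst stream_space_eq_distr) (simp add: distr_distr comp_def)
  also have "\<dots> = distr (\<Pi>\<^sub>M i\<in>UNIV. M) M (\<lambda>\<omega>. \<omega> n)"
    by (simp add: to_stream_def)
  also have "\<dots> = M"
    by (rule PiM_component) simp
  finally show ?thesis .
qed

lemma emeasure_pair_stream_snth:
  assumes "prob_space N" "X \<in> sets M"
  shows "emeasure (N \<Otimes>\<^sub>M stream_space M) {\<omega> \<in> space (N \<Otimes>\<^sub>M stream_space M). snd \<omega> !! n \<in> X}
       = emeasure M X"
proof -
  interpret S: prob_space "stream_space M"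
    by (rule prob_space_stream_space)
  have "{\<omega> \<in> space (N \<Otimes>\<^sub>M stream_space M). snd \<omega> !! n \<in> X}
      = space N \<times> ((\<lambda>s. s !! n) -` X \<inter> space (stream_space M))"
    by (auto simp: space_pair_measure)
  moreover have "emeasure (stream_space M) ((\<lambda>s. s !! n) -` X \<inter> space (stream_space M)) = emeasure M X"
    using emeasure_distr[OF measurable_snth assms(2), of n] by (simp add: distr_snth)
  ultimately show ?thesis
    using S.emeasure_pair_measure_Times[OF sets.top[of N] measurable_sets[OF measurable_snth assms(2)]]
    by (simp add: prob_space.emeasure_space_1[OF assms(1)])
qed

lemma emeasure_stream_avoid:
  assumes H [measurable]: "H \<in> sets M"
  shows "emeasure (stream_space M) {s \<in> space (stream_space M). \<forall>k<n. s !! k \<notin> H}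
       = ennreal ((1 - prob H) ^ n)"
proof (induction n)
  case 0
  then show ?case
    using prob_space.emeasure_space_1[OF prob_space_stream_space] by simp
next
  case (Suc n)
  let ?A = "\<lambda>n. {s \<in> space (stream_space M). \<forall>k<n. s !! k \<notin> H}"
  have step: "{s \<in> space (stream_space M). t ## s \<in> ?A (Suc n)} = (if t \<in> H then {} else ?A n)"
    if "t \<in> space M" for t
    using that by (auto simp: space_stream_space less_Suc_eq_0_disj)
  have "emeasure (stream_space M) (?A (Suc n))
      = (\<integral>\<^sup>+t. emeasure (stream_space M) {s \<in> space (stream_space M). t ## s \<in> ?A (Suc n)} \<partial>M)"
    by (rule emeasure_stream_space) measurable
  also have "\<dots> = (\<integral>\<^sup>+t. ennreal ((1 - prob H) ^ n) * indicator (space M - H) t \<partial>M)"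
  proof (rule nn_integral_cong)
    fix t assume "t \<in> space M"
    then show "emeasure (stream_space M) {s \<in> space (stream_space M). t ## s \<in> ?A (Suc n)}
        = ennreal ((1 - prob H) ^ n) * indicator (space M - H) t"
      unfolding step[OF \<open>t \<in> space M\<close>] using Suc by (simp add: indicator_def)
  qed
  also have "\<dots> = ennreal ((1 - prob H) ^ n) * emeasure M (space M - H)"
    by (rule nn_integral_cmult_indicator) measurable
  also have "\<dots> = ennreal ((1 - prob H) ^ Suc n)"
    using prob_compl[OF H] prob_le_1[of H]
    by (simp add: emeasure_eq_measure ennreal_mult[symmetric] mult.commute)
  finally show ?case .
qed

lemma AE_stream_hits:
  assumes H [measurable]: "H \<in> sets M" and pos: "prob H > 0"
  shows "AE s in stream_space M. \<exists>k. s !! k \<in> H"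
proof -
  interpret S: prob_space "stream_space M"
    by (rule prob_space_stream_space)
  let ?N = "{s \<in> space (stream_space M). \<forall>k. s !! k \<notin> H}"
  have N [measurable]: "?N \<in> sets (stream_space M)"
    by measurable
  have "S.prob ?N \<le> (1 - prob H) ^ n" for n
  proof -
    have "S.prob ?N \<le> S.prob {s \<in> space (stream_space M). \<forall>k<n. s !! k \<notin> H}"
      by (intro S.finite_measure_mono) auto
    also have "\<dots> = (1 - prob H) ^ n"
      using emeasure_stream_avoid[OF H, of n] prob_le_1[of H]
      by (simp add: S.emeasure_eq_measure)
    finally show ?thesis .
  qed
  moreover have "(\<lambda>n. (1 - prob H) ^ n) \<longlonglongrightarrow> 0"
    using pos prob_le_1[of H] by (intro LIMSEQ_realpow_zero) auto
  ultimately have "S.prob ?N \<le> 0"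
    by (intro LIMSEQ_le_const) auto
  then show ?thesis
    by (subst AE_iff_measurable[OF N]) (auto simp: S.emeasure_eq_measure intro: antisym)
qed

lemma nn_integral_stream_first_hit:
  assumes H [measurable]: "H \<in> sets M" and pos: "prob H > 0"
  shows "(\<integral>\<^sup>+s. of_nat (Suc (LEAST k. s !! k \<in> H)) \<partial>stream_space M) = ennreal (1 / prob H)"
proof -
  have first_hit: "(\<lambda>s. Suc (LEAST k. s !! k \<in> H)) \<in> measurable (stream_space M) (count_space UNIV)"
    by measurable
  have tail: "emeasure (stream_space M) {s \<in> space (stream_space M). t < Suc (LEAST k. s !! k \<in> H)}
      = ennreal ((1 - prob H) ^ t)" for t
  proof -
    have "AE s in stream_space M. t < Suc (LEAST k. s !! k \<in> H) \<longleftrightarrow> (\<forall>k<t. s !! k \<notin> H)"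
      using AE_stream_hits[OF H pos]
    proof eventually_elim
      \<comment> \<open>\<open>LEAST\<close> is unspecified on the null set of streams that never hit \<open>H\<close>.\<close>
      case (elim s)
      then have "s !! (LEAST k. s !! k \<in> H) \<in> H"
        by (rule LeastI_ex)
      then show ?case
        using not_less_Least[of _ "\<lambda>k. s !! k \<in> H"] leI by (auto simp: less_Suc_eq_le)
    qed
    then show ?thesis
      unfolding emeasure_stream_avoid[OF H, of t, symmetric] by (intro emeasure_eq_AE) auto
  qed
  have "(\<integral>\<^sup>+s. of_nat (Suc (LEAST k. s !! k \<in> H)) \<partial>stream_space M) = (\<Sum>t. ennreal ((1 - prob H) ^ t))"
    using nn_integral_nat_function[OF first_hit] by (simp only: tail)
  also have "\<dots> = ennreal (1 / prob H)"
    using pos prob_le_1[of H] by (simp add: suminf_ennreal2 suminf_geometric)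
  finally show ?thesis .
qed

end

section \<open>Conditional geometric resampling\<close>

lemma emeasure_Collect_nat_less:
  fixes g :: "'a \<Rightarrow> nat"
  assumes "g \<in> measurable M (count_space UNIV)" "A \<in> sets M"
  shows "emeasure M {x \<in> A. g x < n} = (\<Sum>t<n. emeasure M {x \<in> A. g x = t})"
proof -
  have sets: "{x \<in> A. g x = t} \<in> sets M" for t
  proof -
    have "{x \<in> A. g x = t} = A \<inter> (g -` {t} \<inter> space M)"
      using sets.sets_into_space[OF assms(2)] by auto
    then show ?thesis
      using measurable_sets[OF assms(1), of "{t}"] assms(2) by simp
  qed
  have "disjoint_family_on (\<lambda>t. {x \<in> A. g x = t}) {..<n}"
    by (auto simp: disjoint_family_on_def)
  then have "emeasure M (\<Union>t<n. {x \<in> A. g x = t}) = (\<Sum>t<n. emeasure M {x \<in> A. g x = t})"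
    using sets by (intro sum_emeasure[symmetric]) auto
  moreover have "{x \<in> A. g x < n} = (\<Union>t<n. {x \<in> A. g x = t})"
    by auto
  ultimately show ?thesis
    by simp
qed

lemma sum_inverse_max_le_ln:
  fixes m d :: nat
  assumes m: "1 \<le> m" and "m \<le> d"
  shows "(\<Sum>s = 1..d. 1 / max (real s / real m) 1) \<le> real m + real m * ln (real d / real m)"
  using assms(2)
proof (induction d rule: dec_induct)
  case base
  have "(\<Sum>s = 1..m. 1 / max (real s / real m) 1) = (\<Sum>s = 1..m. 1)"
    using m by (intro sum.cong) (auto simp: max_def field_simps)
  then show ?case
    by simp
next
  case (step n)
  have n: "0 < real n"
    using step m by auto
  have "ln (real n / real (Suc n)) \<le> real n / real (Suc n) - 1"
    using n by (intro ln_le_minus_one) auto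
  then have "1 / real (Suc n) \<le> ln (real (Suc n)) - ln (real n)"
    using n by (simp add: ln_div field_simps)
  then have "real m / real (Suc n) \<le> real m * (ln (real (Suc n)) - ln (real n))"
    using mult_left_mono[of _ _ "real m"] by fastforce
  moreover have "1 / max (real (Suc n) / real m) 1 = real m / real (Suc n)"
    using step m by (auto simp: max_def field_simps)
  ultimately show ?case
    using step n m by (simp add: ln_div algebra_simps)
qed

locale cgr_setting = iid_perturbation +
  fixes m :: nat and \<eta> :: real and L :: "nat \<Rightarrow> real" and \<sigma> :: "nat \<Rightarrow> nat"
  assumes m_pos: "1 \<le> m" and m_le_d: "m \<le> d" and \<eta>_pos: "0 < \<eta>"
    and bij_\<sigma>: "bij_betw \<sigma> {..<d} {1..d}"
    and \<sigma>_mono: "\<And>j k. j < d \<Longrightarrow> k < d \<Longrightarrow> L k < L j \<Longrightarrow> \<sigma> k < \<sigma> j"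
begin

abbreviation Q :: "((nat \<Rightarrow> real) \<times> nat) measure" where
  "Q \<equiv> P \<Otimes>\<^sub>M measure_pmf (pmf_of_set {1..m})"

lemma prob_space_Q: "prob_space Q"
  by (intro prob_space_pair prob_space_P prob_space_measure_pmf)

lemma cgr_space_eq: "cgr_space d m D = P \<Otimes>\<^sub>M stream_space Q"
  unfolding cgr_space_def ..

definition better_arms :: "nat \<Rightarrow> nat set" where
  "better_arms i = {j \<in> {..<d}. \<sigma> j \<le> \<sigma> i}"

lemma better_arms_subset: "better_arms i \<subseteq> {..<d}"
  by (auto simp: better_arms_def)

lemma self_in_better_arms: "i < d \<Longrightarrow> i \<in> better_arms i"
  by (simp add: better_arms_def)

lemma finite_better_arms: "finite (better_arms i)"
  using better_arms_subset by (rule finite_subset) simp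

lemma measurable_rank_among_better_arms:
  "(\<lambda>r. rank_among (better_arms i) r i) \<in> measurable P (count_space UNIV)"
  using finite_better_arms by (rule measurable_rank_among_P)

lemma card_better_arms:
  assumes "i < d"
  shows "card (better_arms i) = \<sigma> i"
proof -
  have range: "\<sigma> ` {..<d} = {1..d}"
    using bij_\<sigma> by (simp add: bij_betw_def)
  have "\<sigma> ` better_arms i = {1..\<sigma> i}"
  proof (intro equalityI subsetI)
    fix s assume "s \<in> \<sigma> ` better_arms i"
    then show "s \<in> {1..\<sigma> i}"
      using range by (force simp: better_arms_def)
  next
    fix s assume s: "s \<in> {1..\<sigma> i}"
    moreover have "\<sigma> i \<le> d"
      using range assms by force
    ultimately obtain j where "j < d" "\<sigma> j = s"
      using range by (metis atLeastAtMost_iff imageE le_trans lessThan_iff)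
    then show "s \<in> \<sigma> ` better_arms i"
      using s by (auto simp: better_arms_def)
  qed
  moreover have "inj_on \<sigma> (better_arms i)"
    using bij_\<sigma> better_arms_subset by (auto simp: bij_betw_def intro: inj_on_subset)
  ultimately show ?thesis
    by (metis card_atLeastAtMost card_image diff_Suc_1)
qed

lemma cgr_swap_eq:
  "cgr_swap d \<sigma> i r \<theta> = r \<circ> Transposition.transpose i (kth_largest (better_arms i) r \<theta>)"
  unfolding cgr_swap_def better_arms_def Let_def fun_upd_swap_eq_comp_transpose ..

lemma cgr_swap_in_space:
  assumes "i < d" "r \<in> space P" "\<theta> \<in> {1..\<sigma> i}"
  shows "cgr_swap d \<sigma> i r \<theta> \<in> space P"
proof -
  have "\<theta> - 1 < card (better_arms i)"
    using assms card_better_arms by auto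
  then have "kth_largest (better_arms i) r \<theta> \<in> better_arms i"
    using kth_largest_in[OF finite_better_arms, of "\<theta> - 1" i r] assms(3) by simp
  then show ?thesis
    unfolding cgr_swap_eq using assms better_arms_subset
    by (intro measurable_space[OF measurable_comp_transpose]) auto
qed

lemma measurable_swap_index:
  "(\<lambda>x. kth_largest (better_arms i) (fst x) (snd x)) \<in> measurable Q (count_space UNIV)"
proof (rule measurable_compose_countable[where f = "\<lambda>\<theta> x. kth_largest (better_arms i) (fst x) \<theta>"])
  show "(\<lambda>x. kth_largest (better_arms i) (fst x) \<theta>) \<in> measurable Q (count_space UNIV)" for \<theta>
    using finite_better_arms by (rule measurable_kth_largest) measurable
qed measurable

lemma sets_cgr_swap_preimage:
  assumes "i < d" "A \<in> sets P"
  shows "{x \<in> space Q. cgr_swap d \<sigma> i (fst x) (snd x) \<in> A} \<in> sets Q"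
proof -
  have "Measurable.pred Q (\<lambda>x. fst x \<circ> Transposition.transpose i (kth_largest (better_arms i) (fst x) (snd x)) \<in> A)"
    by (rule measurable_compose_countable[where f = "\<lambda>j x. fst x \<circ> Transposition.transpose i j \<in> A",
          OF _ measurable_swap_index])
      (rule measurable_compose[OF measurable_fst pred_comp_transpose_in[OF assms]])
  then show ?thesis
    by (simp only: pred_def cgr_swap_eq)
qed

lemma pred_cgr_hit:
  assumes "i < d"
  shows "Measurable.pred Q (cgr_hit d m \<eta> L \<sigma> i)"
proof -
  have "Measurable.pred Q (\<lambda>x. ftpl_act d m \<eta> L
      (fst x \<circ> Transposition.transpose i (kth_largest (better_arms i) (fst x) (snd x))) i)"
    by (rule measurable_compose_countable[where f = "\<lambda>j x. ftpl_act d m \<eta> L (fst x \<circ> Transposition.transpose i j) i",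
          OF _ measurable_swap_index])
      (rule pred_ftpl_act, unfold comp_def, measurable)
  moreover have "Measurable.pred Q (\<lambda>x. ftpl_act d m \<eta> L (fst x) i)"
    by (rule pred_ftpl_act) measurable
  ultimately show ?thesis
    unfolding cgr_hit_def[abs_def] cgr_swap_eq by simp
qed

lemma emeasure_cgr_swap_preimage:
  assumes i: "i < d" and mi: "m < \<sigma> i" and X: "X \<in> sets Q" and B: "B \<in> sets P"
    and slices: "\<And>r \<theta>. r \<in> space P \<Longrightarrow> \<theta> \<in> {1..m} \<Longrightarrow> (r, \<theta>) \<in> X \<longleftrightarrow> cgr_swap d \<sigma> i r \<theta> \<in> B"
  shows "emeasure Q X = ennreal (\<sigma> i / m) * emeasure P {r \<in> B. rank_among (better_arms i) r i < m}"
proof -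
  let ?S = "better_arms i"
  have "emeasure Q X = ennreal (1 / m) * (\<Sum>\<theta>\<in>{1..m}. emeasure P {r \<in> space P. (r, \<theta>) \<in> X})"
    using m_pos X prob_space_imp_sigma_finite[OF prob_space_P]
    by (subst emeasure_pair_measure_pmf_of_set) auto
  also have "(\<Sum>\<theta>\<in>{1..m}. emeasure P {r \<in> space P. (r, \<theta>) \<in> X})
      = (\<Sum>t<m. emeasure P {r \<in> space P. r \<circ> Transposition.transpose i (kth_largest ?S r (Suc t)) \<in> B})"
    unfolding sum.atLeast1_atMost_eq[of _ m, unfolded One_nat_def[symmetric]]
    using slices by (intro sum.cong refl arg_cong[where f = "emeasure P"]) (auto simp: cgr_swap_eq)
  also have "\<dots> = (\<Sum>t<m. of_nat (\<sigma> i) * emeasure P {r \<in> B. rank_among ?S r i = t})"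
  proof (rule sum.cong[OF refl])
    fix t assume "t \<in> {..<m}"
    then have "t < card ?S"
      using mi card_better_arms[OF i] by simp
    then show "emeasure P {r \<in> space P. r \<circ> Transposition.transpose i (kth_largest ?S r (Suc t)) \<in> B}
        = of_nat (\<sigma> i) * emeasure P {r \<in> B. rank_among ?S r i = t}"
      using emeasure_comp_transpose_kth_largest[OF better_arms_subset self_in_better_arms[OF i] _ B]
      by (simp add: card_better_arms[OF i])
  qed
  also have "\<dots> = of_nat (\<sigma> i) * emeasure P {r \<in> B. rank_among ?S r i < m}"
    by (simp add: emeasure_Collect_nat_less[OF measurable_rank_among_better_arms B] sum_distrib_left)
  finally show ?thesis
    using m_pos by (simp add: ennreal_of_nat_eq_real_of_nat ennreal_mult'[symmetric] mult.assoc[symmetric])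
qed

lemma sets_cgr_event: "cgr_event d m D \<sigma> i \<in> sets P"
proof -
  have [measurable]: "Measurable.pred P (\<lambda>r. r i \<le> r j)" for j
    unfolding pred_def by measurable
  have "(\<lambda>r. card {j \<in> {..<d}. r i \<le> r j \<and> \<sigma> j \<le> \<sigma> i}) \<in> measurable P (count_space UNIV)"
    by (rule measurable_card_Collect) measurable
  then show ?thesis
    unfolding cgr_event_def by measurable
qed

lemma AE_cgr_event_iff:
  assumes i: "i < d"
  shows "AE r in P. r \<in> cgr_event d m D \<sigma> i \<longleftrightarrow> r \<in> space P \<and> rank_among (better_arms i) r i < m"
  using AE_inj_on
proof eventually_elim
  case (elim r)
  have "{j \<in> {..<d}. r i \<le> r j \<and> \<sigma> j \<le> \<sigma> i} = insert i {k \<in> better_arms i. beats r k i}"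
    using i elim by (auto simp: better_arms_def beats_def inj_on_eq_iff)
  then have "card {j \<in> {..<d}. r i \<le> r j \<and> \<sigma> j \<le> \<sigma> i} = Suc (rank_among (better_arms i) r i)"
    using finite_better_arms by (simp add: rank_among_def beats_irrefl)
  then show ?case
    by (auto simp: cgr_event_def)
qed

lemma emeasure_cgr_event_inter:
  assumes i: "i < d" and A: "A \<in> sets P"
  shows "emeasure P (cgr_event d m D \<sigma> i \<inter> A) = emeasure P {r \<in> A. rank_among (better_arms i) r i < m}"
proof (rule emeasure_eq_AE)
  show "{r \<in> A. rank_among (better_arms i) r i < m} \<in> sets P"
    using measurable_rank_among_better_arms A sets.sets_into_space[OF A] by measurable
  show "AE r in P. r \<in> cgr_event d m D \<sigma> i \<inter> A \<longleftrightarrow> r \<in> {r \<in> A. rank_among (better_arms i) r i < m}"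
    using AE_cgr_event_iff[OF i] by eventually_elim (use sets.sets_into_space[OF A] in auto)
qed (use sets_cgr_event A in auto)

lemma emeasure_cgr_event:
  assumes i: "i < d" and mi: "m < \<sigma> i"
  shows "emeasure P (cgr_event d m D \<sigma> i) = ennreal (m / \<sigma> i)"
proof -
  have "emeasure P (cgr_event d m D \<sigma> i) = emeasure P {r \<in> space P. rank_among (better_arms i) r i < m}"
    using emeasure_cgr_event_inter[OF i sets.top] sets.sets_into_space[OF sets_cgr_event]
    by (simp add: Int_absorb2)
  also have "\<dots> = (\<Sum>t<m. ennreal (1 / \<sigma> i))"
    using mi card_better_arms[OF i]
    by (simp add: emeasure_Collect_nat_less[OF measurable_rank_among_better_arms sets.top]
        emeasure_rank_among[OF better_arms_subset self_in_better_arms[OF i]])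
  finally show ?thesis
    by (simp add: ennreal_of_nat_eq_real_of_nat ennreal_mult'[symmetric])
qed

theorem distr_cgr_swap_sample:
  assumes i: "i < d" and mi: "m < \<sigma> i"
  shows "distr (cgr_space d m D) P (\<lambda>\<omega>. cgr_swap d \<sigma> i (fst (snd \<omega> !! k)) (snd (snd \<omega> !! k)))
       = uniform_measure P (cgr_event d m D \<sigma> i)"
    (is "distr _ _ ?f = _")
proof (unfold cgr_space_eq, rule measure_eqI)
  fix A assume "A \<in> sets (distr (P \<Otimes>\<^sub>M stream_space Q) P ?f)"
  then have A: "A \<in> sets P"
    by simp
  define X where "X A = {x \<in> space Q. cgr_swap d \<sigma> i (fst x) (snd x) \<in> A}" for A
  have X_sets: "X A \<in> sets Q" if "A \<in> sets P" for A
    unfolding X_def using i that by (rule sets_cgr_swap_preimage)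
  have preimage: "?f -` A \<inter> space (P \<Otimes>\<^sub>M stream_space Q)
      = {\<omega> \<in> space (P \<Otimes>\<^sub>M stream_space Q). snd \<omega> !! k \<in> X A}" for A
    by (auto simp: X_def space_pair_measure space_stream_space snth_in)
  have "emeasure (distr (P \<Otimes>\<^sub>M stream_space Q) P ?f) A
      = emeasure (P \<Otimes>\<^sub>M stream_space Q) {\<omega> \<in> space (P \<Otimes>\<^sub>M stream_space Q). snd \<omega> !! k \<in> X A}"
    unfolding preimage[symmetric] using A
  proof (rule emeasure_distr_preimages[rotated])
    fix A' assume "A' \<in> sets P"
    then show "?f -` A' \<inter> space (P \<Otimes>\<^sub>M stream_space Q) \<in> sets (P \<Otimes>\<^sub>M stream_space Q)"
      unfolding preimage using X_sets by measurable
  qed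
  also have "\<dots> = emeasure Q (X A)"
    by (rule prob_space.emeasure_pair_stream_snth[OF prob_space_Q prob_space_P X_sets[OF A]])
  also have "\<dots> = ennreal (\<sigma> i / m) * emeasure P {r \<in> A. rank_among (better_arms i) r i < m}"
    using i mi X_sets[OF A] A by (rule emeasure_cgr_swap_preimage) (auto simp: X_def space_pair_measure)
  also have "\<dots> = emeasure (uniform_measure P (cgr_event d m D \<sigma> i)) A"
    using mi m_pos
    by (simp add: emeasure_uniform_measure[OF sets_cgr_event A] emeasure_cgr_event_inter[OF i A]
        emeasure_cgr_event[OF i mi] divide_ennreal_def inverse_ennreal mult.commute)
  finally show "emeasure (distr (P \<Otimes>\<^sub>M stream_space Q) P ?f) A
      = emeasure (uniform_measure P (cgr_event d m D \<sigma> i)) A" .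
qed simp

definition played :: "nat \<Rightarrow> (nat \<Rightarrow> real) set" where
  "played i = {r \<in> space P. ftpl_act d m \<eta> L r i}"

definition resample_scale :: "nat \<Rightarrow> real" where
  "resample_scale i = max (real (\<sigma> i) / real m) 1"

definition hit_time :: "nat \<Rightarrow> ((nat \<Rightarrow> real) \<times> nat) stream \<Rightarrow> nat" where
  "hit_time i s = Suc (LEAST k. cgr_hit d m \<eta> L \<sigma> i (s !! k))"

lemma sets_played: "played i \<in> sets P"
proof -
  have "Measurable.pred P (\<lambda>r. ftpl_act d m \<eta> L r i)"
    by (rule pred_ftpl_act) simp
  then show ?thesis
    by (simp add: played_def pred_def)
qed

lemma ftpl_w_eq: "ftpl_w d m D \<eta> L i = measure P (played i)"
  by (simp add: ftpl_w_def played_def)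

lemma resample_scale_pos: "0 < resample_scale i"
  by (simp add: resample_scale_def)

lemma cgr_est_eq: "cgr_est d m \<eta> L \<sigma> i \<omega> = resample_scale i * hit_time i (snd \<omega>)"
  by (simp add: cgr_est_def cgr_M_def resample_scale_def hit_time_def)

lemma ennreal_cgr_est:
  "ennreal (cgr_est d m \<eta> L \<sigma> i \<omega>) = ennreal (resample_scale i) * of_nat (hit_time i (snd \<omega>))"
  using resample_scale_pos[of i] by (simp add: cgr_est_eq ennreal_mult ennreal_of_nat_eq_real_of_nat)

lemma measurable_hit_time:
  assumes "i < d"
  shows "hit_time i \<in> measurable (stream_space Q) (count_space UNIV)"
proof -
  have [measurable]: "Measurable.pred Q (cgr_hit d m \<eta> L \<sigma> i)"
    using assms by (rule pred_cgr_hit)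
  show ?thesis
    unfolding hit_time_def[abs_def] by measurable
qed

lemma ftpl_act_imp_rank_among_less:
  assumes i: "i < d" and inj: "inj_on r {..<d}" and act: "ftpl_act d m \<eta> L r i"
  shows "rank_among (better_arms i) r i < m"
proof -
  have "{k \<in> better_arms i. beats r k i} \<subseteq> {k \<in> {..<d}. beats (score \<eta> L r) k i}"
  proof safe
    fix k assume k: "k \<in> better_arms i" "beats r k i"
    then have kd: "k < d" and "\<sigma> k \<le> \<sigma> i"
      by (auto simp: better_arms_def)
    then have "L k \<le> L i"
      using \<sigma>_mono[OF kd i] by force
    then have "\<eta> * L k \<le> \<eta> * L i"
      using \<eta>_pos by simp
    moreover have "r i < r k"
      using k kd i inj beats_irrefl by (metis beats_iff_less inj_on_eq_iff lessThan_iff)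
    ultimately have "score \<eta> L r i < score \<eta> L r k"
      by (simp add: score_def)
    then show "beats (score \<eta> L r) k i"
      by (simp add: beats_def)
  qed (auto simp: better_arms_def)
  then have "rank_among (better_arms i) r i \<le> rank_among {..<d} (score \<eta> L r) i"
    unfolding rank_among_def by (intro card_mono) auto
  then show ?thesis
    using act by (simp add: ftpl_act_iff_rank_among)
qed

lemma emeasure_played: "emeasure P (played i) = ennreal (ftpl_w d m D \<eta> L i)"
proof -
  interpret P: prob_space P
    by (rule prob_space_P)
  show ?thesis
    by (simp add: ftpl_w_eq P.emeasure_eq_measure)
qed

lemma emeasure_played_rank_among_less:
  assumes i: "i < d"
  shows "emeasure P {r \<in> played i. rank_among (better_arms i) r i < m} = emeasure P (played i)"
proof (rule emeasure_eq_AE)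
  show "AE r in P. r \<in> {r \<in> played i. rank_among (better_arms i) r i < m} \<longleftrightarrow> r \<in> played i"
    using AE_inj_on by eventually_elim (auto simp: played_def intro: ftpl_act_imp_rank_among_less[OF i])
  show "{r \<in> played i. rank_among (better_arms i) r i < m} \<in> sets P"
    using measurable_rank_among_better_arms sets_played sets.sets_into_space[OF sets_played]
    by measurable
qed (rule sets_played)

lemma emeasure_cgr_hit:
  assumes i: "i < d"
  shows "emeasure Q {x \<in> space Q. cgr_hit d m \<eta> L \<sigma> i x} = ennreal (resample_scale i * ftpl_w d m D \<eta> L i)"
proof (cases "m < \<sigma> i")
  case True
  have "emeasure Q {x \<in> space Q. cgr_hit d m \<eta> L \<sigma> i x}
      = ennreal (\<sigma> i / m) * emeasure P {r \<in> played i. rank_among (better_arms i) r i < m}"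
  proof (rule emeasure_cgr_swap_preimage[OF i True _ sets_played])
    show "{x \<in> space Q. cgr_hit d m \<eta> L \<sigma> i x} \<in> sets Q"
      using pred_cgr_hit[OF i] unfolding pred_def by simp
    fix r \<theta> assume "r \<in> space P" "\<theta> \<in> {1..m}"
    moreover from this have "cgr_swap d \<sigma> i r \<theta> \<in> space P"
      using True by (intro cgr_swap_in_space[OF i]) auto
    ultimately show "(r, \<theta>) \<in> {x \<in> space Q. cgr_hit d m \<eta> L \<sigma> i x} \<longleftrightarrow> cgr_swap d \<sigma> i r \<theta> \<in> played i"
      using True by (simp add: cgr_hit_def played_def space_pair_measure)
  qed
  also have "emeasure P {r \<in> played i. rank_among (better_arms i) r i < m} = emeasure P (played i)"
    using i by (rule emeasure_played_rank_among_less)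
  finally show ?thesis
    using True m_pos ftpl_w_eq[of i]
    by (simp add: emeasure_played resample_scale_def ennreal_mult'[symmetric])
next
  case False
  let ?\<Theta> = "measure_pmf (pmf_of_set {1..m})"
  have "{x \<in> space Q. cgr_hit d m \<eta> L \<sigma> i x} = played i \<times> space ?\<Theta>"
    using False by (auto simp: cgr_hit_def played_def space_pair_measure)
  moreover have "emeasure Q (played i \<times> space ?\<Theta>) = emeasure P (played i) * emeasure ?\<Theta> (space ?\<Theta>)"
    by (rule sigma_finite_measure.emeasure_pair_measure_Times[OF
          prob_space_imp_sigma_finite[OF prob_space_measure_pmf] sets_played sets.top])
  ultimately have "emeasure Q {x \<in> space Q. cgr_hit d m \<eta> L \<sigma> i x} = emeasure P (played i)"
    by (simp add: prob_space.emeasure_space_1[OF prob_space_measure_pmf])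
  moreover have "resample_scale i = 1"
    using False m_pos by (simp add: resample_scale_def field_simps)
  ultimately show ?thesis
    by (simp add: emeasure_played)
qed

lemma nn_integral_hit_time:
  assumes i: "i < d" and w: "0 < ftpl_w d m D \<eta> L i"
  shows "(\<integral>\<^sup>+s. of_nat (hit_time i s) \<partial>stream_space Q) = ennreal (1 / (resample_scale i * ftpl_w d m D \<eta> L i))"
proof -
  interpret Q: prob_space Q
    by (rule prob_space_Q)
  let ?H = "{x \<in> space Q. cgr_hit d m \<eta> L \<sigma> i x}"
  have H: "?H \<in> sets Q"
    using pred_cgr_hit[OF i] unfolding pred_def by simp
  have "ennreal (Q.prob ?H) = ennreal (resample_scale i * ftpl_w d m D \<eta> L i)"
    using emeasure_cgr_hit[OF i] by (simp only: Q.emeasure_eq_measure)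
  then have "Q.prob ?H = resample_scale i * ftpl_w d m D \<eta> L i"
    using resample_scale_pos[of i] measure_nonneg[of P "played i"]
    by (subst (asm) ennreal_inj) (auto simp: ftpl_w_eq)
  moreover have "(\<integral>\<^sup>+s. of_nat (hit_time i s) \<partial>stream_space Q)
      = (\<integral>\<^sup>+s. of_nat (Suc (LEAST k. s !! k \<in> ?H)) \<partial>stream_space Q)"
    by (intro nn_integral_cong) (simp add: hit_time_def space_stream_space snth_in)
  ultimately show ?thesis
    using Q.nn_integral_stream_first_hit[OF H] w resample_scale_pos[of i] by simp
qed

lemma borel_measurable_played_hit_time:
  assumes "i < d"
  shows "(\<lambda>\<omega>. indicator (played i) (fst \<omega>) * of_nat (hit_time i (snd \<omega>)) :: ennreal)
    \<in> borel_measurable (P \<Otimes>\<^sub>M stream_space Q)"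
  by (intro borel_measurable_times_ennreal
      measurable_compose[OF measurable_fst borel_measurable_indicator[OF sets_played]]
      measurable_compose[OF measurable_snd measurable_compose[OF measurable_hit_time[OF assms]]])
    (rule borel_measurable_count_space)

lemma nn_integral_played_hit_time:
  assumes "i < d"
  shows "(\<integral>\<^sup>+\<omega>. indicator (played i) (fst \<omega>) * of_nat (hit_time i (snd \<omega>)) \<partial>(P \<Otimes>\<^sub>M stream_space Q))
       = emeasure P (played i) * (\<integral>\<^sup>+s. of_nat (hit_time i s) \<partial>stream_space Q)"
proof -
  have sigma_finite: "sigma_finite_measure (stream_space Q)"
    by (intro prob_space_imp_sigma_finite prob_space.prob_space_stream_space prob_space_Q)
  have hit: "(\<lambda>s. of_nat (hit_time i s) :: ennreal) \<in> borel_measurable (stream_space Q)"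
    by (rule measurable_compose[OF measurable_hit_time[OF assms] borel_measurable_count_space])
  show ?thesis
    unfolding nn_integral_pair_measure_mult[OF sigma_finite borel_measurable_indicator[OF sets_played] hit]
    by (simp only: nn_integral_indicator[OF sets_played])
qed

theorem nn_integral_cgr_est:
  assumes i: "i < d" and w: "0 < ftpl_w d m D \<eta> L i"
  shows "(\<integral>\<^sup>+\<omega>. ennreal (cgr_est d m \<eta> L \<sigma> i \<omega>)
            \<partial>uniform_measure (cgr_space d m D) {\<omega> \<in> space (cgr_space d m D). ftpl_act d m \<eta> L (fst \<omega>) i})
       = ennreal (1 / ftpl_w d m D \<eta> L i)"
proof (unfold cgr_space_eq)
  interpret S: prob_space "stream_space Q"
    by (rule prob_space.prob_space_stream_space[OF prob_space_Q])
  let ?w = "ftpl_w d m D \<eta> L i" and ?c = "resample_scale i" and ?\<Omega> = "P \<Otimes>\<^sub>M stream_space Q"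
  let ?A = "{\<omega> \<in> space ?\<Omega>. ftpl_act d m \<eta> L (fst \<omega>) i}"
  have A_eq: "?A = played i \<times> space (stream_space Q)"
    by (auto simp: played_def space_pair_measure)
  have A_sets: "?A \<in> sets ?\<Omega>"
    unfolding A_eq using sets_played by measurable
  have "emeasure ?\<Omega> (played i \<times> space (stream_space Q))
      = emeasure P (played i) * emeasure (stream_space Q) (space (stream_space Q))"
    by (rule S.emeasure_pair_measure_Times[OF sets_played sets.top])
  then have A_measure: "emeasure ?\<Omega> ?A = ennreal ?w"
    unfolding A_eq by (simp only: S.emeasure_space_1 emeasure_played mult_1_right)
  have est: "(\<lambda>\<omega>. ennreal (cgr_est d m \<eta> L \<sigma> i \<omega>)) \<in> borel_measurable ?\<Omega>"
    unfolding ennreal_cgr_est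
    by (rule measurable_compose[OF measurable_snd measurable_compose[OF measurable_hit_time[OF i]]])
      (rule borel_measurable_count_space)
  have "(\<integral>\<^sup>+\<omega>. ennreal (cgr_est d m \<eta> L \<sigma> i \<omega>) * indicator ?A \<omega> \<partial>?\<Omega>)
      = (\<integral>\<^sup>+\<omega>. ennreal ?c * (indicator (played i) (fst \<omega>) * of_nat (hit_time i (snd \<omega>))) \<partial>?\<Omega>)"
  proof (rule nn_integral_cong)
    fix \<omega> assume "\<omega> \<in> space ?\<Omega>"
    then have "indicator ?A \<omega> = (indicator (played i) (fst \<omega>) :: ennreal)"
      by (auto simp: indicator_def played_def space_pair_measure)
    then show "ennreal (cgr_est d m \<eta> L \<sigma> i \<omega>) * indicator ?A \<omega>
        = ennreal ?c * (indicator (played i) (fst \<omega>) * of_nat (hit_time i (snd \<omega>)))"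
      by (simp only: ennreal_cgr_est ac_simps)
  qed
  also have "\<dots> = ennreal ?c * (ennreal ?w * ennreal (1 / (?c * ?w)))"
    using borel_measurable_played_hit_time[OF i]
    by (simp only: nn_integral_cmult nn_integral_played_hit_time[OF i] emeasure_played
        nn_integral_hit_time[OF i w])
  also have "\<dots> = 1"
    using w resample_scale_pos[of i] by (simp add: ennreal_mult'[symmetric])
  finally show "(\<integral>\<^sup>+\<omega>. ennreal (cgr_est d m \<eta> L \<sigma> i \<omega>) \<partial>uniform_measure ?\<Omega> ?A) = ennreal (1 / ?w)"
    unfolding nn_integral_uniform_measure[OF est A_sets] A_measure
    using w by (simp add: divide_ennreal[symmetric])
qed

lemma exists_ftpl_act: "\<exists>i<d. ftpl_act d m \<eta> L r i"
proof -
  have "0 \<in> rank_among {..<d} (score \<eta> L r) ` {..<d}"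
    using bij_betw_imp_surj_on[OF bij_betw_rank_among[of "{..<d}" "score \<eta> L r"]] m_pos m_le_d by simp
  then show ?thesis
    using m_pos by (auto simp: ftpl_act_iff_rank_among)
qed

lemma cgr_Mtot_le_sum:
  "of_nat (cgr_Mtot d m \<eta> L \<sigma> \<omega>) \<le> (\<Sum>i<d. indicator (played i) (fst \<omega>) * of_nat (hit_time i (snd \<omega>)) :: ennreal)"
  if "\<omega> \<in> space (P \<Otimes>\<^sub>M stream_space Q)"
proof -
  let ?T = "{cgr_M d m \<eta> L \<sigma> i \<omega> | i. i < d \<and> ftpl_act d m \<eta> L (fst \<omega>) i}"
  have "?T = (\<lambda>i. cgr_M d m \<eta> L \<sigma> i \<omega>) ` {i. i < d \<and> ftpl_act d m \<eta> L (fst \<omega>) i}"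
    by auto
  then have "Max ?T \<in> ?T"
    using exists_ftpl_act[of "fst \<omega>"] by (intro Max_in) auto
  then obtain i where i: "i < d" "ftpl_act d m \<eta> L (fst \<omega>) i" "cgr_Mtot d m \<eta> L \<sigma> \<omega> = hit_time i (snd \<omega>)"
    by (auto simp: cgr_Mtot_def cgr_M_def hit_time_def)
  then have "of_nat (cgr_Mtot d m \<eta> L \<sigma> \<omega>) = (indicator (played i) (fst \<omega>) * of_nat (hit_time i (snd \<omega>)) :: ennreal)"
    using that by (auto simp: played_def space_pair_measure)
  also have "\<dots> \<le> (\<Sum>i<d. indicator (played i) (fst \<omega>) * of_nat (hit_time i (snd \<omega>)))"
    using i(1) by (intro member_le_sum) auto
  finally show ?thesis .
qed

lemma emeasure_played_times_hit_time:
  assumes i: "i < d"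
  shows "emeasure P (played i) * (\<integral>\<^sup>+s. of_nat (hit_time i s) \<partial>stream_space Q) \<le> ennreal (1 / resample_scale i)"
proof (cases "ftpl_w d m D \<eta> L i = 0")
  case False
  then have w: "0 < ftpl_w d m D \<eta> L i"
    using measure_nonneg[of P "played i"] by (simp add: ftpl_w_eq order_less_le)
  have "ftpl_w d m D \<eta> L i * (1 / (resample_scale i * ftpl_w d m D \<eta> L i)) = 1 / resample_scale i"
    using w by simp
  then show ?thesis
    unfolding emeasure_played nn_integral_hit_time[OF i w]
    using w resample_scale_pos[of i] by (simp add: ennreal_mult'[symmetric])
qed (simp add: emeasure_played)

theorem nn_integral_cgr_Mtot_le:
  "(\<integral>\<^sup>+\<omega>. ennreal (real (cgr_Mtot d m \<eta> L \<sigma> \<omega>)) \<partial>cgr_space d m D)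
     \<le> ennreal (real m + real m * ln (real d / real m))"
proof -
  have "(\<integral>\<^sup>+\<omega>. ennreal (real (cgr_Mtot d m \<eta> L \<sigma> \<omega>)) \<partial>cgr_space d m D)
      \<le> (\<integral>\<^sup>+\<omega>. (\<Sum>i<d. indicator (played i) (fst \<omega>) * of_nat (hit_time i (snd \<omega>))) \<partial>(P \<Otimes>\<^sub>M stream_space Q))"
    unfolding cgr_space_eq ennreal_of_nat_eq_real_of_nat[symmetric]
    by (intro nn_integral_mono cgr_Mtot_le_sum)
  also have "\<dots> = (\<Sum>i<d. emeasure P (played i) * (\<integral>\<^sup>+s. of_nat (hit_time i s) \<partial>stream_space Q))"
    using borel_measurable_played_hit_time
    by (subst nn_integral_sum) (auto intro: sum.cong nn_integral_played_hit_time simp del: One_nat_def)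
  also have "\<dots> \<le> (\<Sum>i<d. ennreal (1 / resample_scale i))"
    by (intro sum_mono emeasure_played_times_hit_time) simp
  also have "\<dots> = ennreal (\<Sum>s = 1..d. 1 / max (real s / real m) 1)"
    using sum.reindex_bij_betw[OF bij_\<sigma>, of "\<lambda>s. 1 / max (real s / real m) 1"] resample_scale_pos
    by (simp add: sum_ennreal resample_scale_def less_imp_le)
  also have "\<dots> \<le> ennreal (real m + real m * ln (real d / real m))"
    using m_pos m_le_d by (intro ennreal_leI sum_inverse_max_le_ln)
  finally show ?thesis .
qed

end

theorem lemma7:
  fixes d m :: nat and D :: "real measure" and \<eta> :: real
    and L :: "nat \<Rightarrow> real" and \<sigma> :: "nat \<Rightarrow> nat"
  assumes "1 \<le> m" and "m \<le> d"
    and "prob_space D" and "sets D = sets borel"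
    and "\<And>x. emeasure D {x} = 0"
    and "\<eta> > 0"
    and "bij_betw \<sigma> {..<d} {1..d}"
    and "\<And>j k. j < d \<Longrightarrow> k < d \<Longrightarrow> L k < L j \<Longrightarrow> \<sigma> k < \<sigma> j"
  shows
    "(\<forall>i<d. m < \<sigma> i \<longrightarrow> (\<forall>k.
        distr (cgr_space d m D) (pert d D) (\<lambda>\<omega>. cgr_swap d \<sigma> i (fst (snd \<omega> !! k)) (snd (snd \<omega> !! k)))
        = uniform_measure (pert d D) (cgr_event d m D \<sigma> i)))
   \<and> (\<forall>i<d. 0 < ftpl_w d m D \<eta> L i \<longrightarrow>
        (\<integral>\<^sup>+ \<omega>. ennreal (cgr_est d m \<eta> L \<sigma> i \<omega>)
            \<partial>uniform_measure (cgr_space d m D) {\<omega> \<in> space (cgr_space d m D). ftpl_act d m \<eta> L (fst \<omega>) i})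
        = ennreal (1 / ftpl_w d m D \<eta> L i))
   \<and> (\<integral>\<^sup>+ \<omega>. ennreal (real (cgr_Mtot d m \<eta> L \<sigma> \<omega>)) \<partial>cgr_space d m D)
        \<le> ennreal (real m + real m * ln (real d / real m))"
proof -
  interpret cgr_setting d D m \<eta> L \<sigma>
    by (intro cgr_setting.intro iid_perturbation.intro cgr_setting_axioms.intro) (fact assms)+
  show ?thesis
    by (intro conjI allI impI distr_cgr_swap_sample nn_integral_cgr_est nn_integral_cgr_Mtot_le)
qed

end
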